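(* Let $(\psi,p,A)$ be a regular normal extremal containing an interior three-bang block $X(\tau_X)\,Y(\ell)\,X(\tau_X)$, i.e. three consecutive arcs, an $X$-arc of length $\tau_X=\pi/\sin\gamma$, a $Y$-arc of length $\ell\in(0,2\pi)$, and an $X$-arc of length $\tau_X$, whose initial and final times are both switching times. If the reduced data at the initial time of the block are $(0,a,b)$ with $a\neq0$, then the reduced data at its final time are $(0,-a,b)$, i.e. the same as those produced by a single switching-to-switching $Y$-arc started from $(0,a,b)$, while the block has total length $2\pi/\sin\gamma+\ell$, strictly larger than the length (in $(0,2\pi)$) of that $Y$-arc. Consequently, such an interior $XYX$ block cannot occur on a regular normal time-optimal extremal.
   Context: Fix $\gamma\in(0,\pi/2)$, $s=\sin\gamma$, $c=\cos\gamma$, and $X=\begin{pmatrix}0&s^2&sc\\-s^2&0&0\\-sc&0&0\end{pmatrix}$, $Y=\begin{pmatrix}0&1&0\\-1&0&0\\0&0&0\end{pmatrix}$ on $\mathbb R^3$ with standard basis $e_1,e_2,e_3$ and standard inner product. Let $\Sigma=\{\psi:\langle e_3,\psi\rangle=0\}$, $\psi_0=(0,s,c)^\top$. Time-optimal problem: over piecewise constant controls $A:[0,T]\to\{X,Y\}$ with finitely many discontinuities (switching times) and trajectories $\dot\psi=A(t)\psi$, $\psi(0)=\psi_0$, minimize $T$ subject to $\psi(T)\in\Sigma$. Maximal intervals on which $A\equiv X$ (resp. $Y$) are $X$-arcs (resp. $Y$-arcs), also called bangs. A normal extremal is such a trajectory with a nonzero absolutely continuous costate $p$ satisfying $\dot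 p=-A(t)^\top p$ and, for a.e. $t$, $\langle p,A(t)\psi\rangle-1=\max_{B\in\{X,Y\}}(\langle p,B\psi\rangle-1)$. Let $F_1=X-Y$, $F_2=[X,Y]$, $F_3=[Y,[X,Y]]$, and reduced data $(\phi_1,\phi_2,\phi_3)$ with $\phi_i=\langle p,F_i\psi\rangle$; the switching function is $\Phi=\phi_1$. A normal extremal is regular (bang–bang) if $\Phi$ vanishes only at isolated times and at every switching time $\phi_1=0$ and $\phi_2\neq 0$. Time-optimal means the trajectory solves the minimization problem. *)

theory Defs
  imports "HOL-Analysis.Analysis"
begin

definition Xm :: "real \<Rightarrow> real^3^3" where
  "Xm \<gamma> = (let s = sin \<gamma>; c = cos \<gamma> in
     vector [vector [0, s^2, s*c], vector [- (s^2), 0, 0], vector [- (s*c), 0, 0]])"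

definition Ym :: "real^3^3" where
  "Ym = vector [vector [0, 1, 0], vector [-1, 0, 0], vector [0, 0, 0]]"

definition psi0 :: "real \<Rightarrow> real^3" where
  "psi0 \<gamma> = vector [0, sin \<gamma>, cos \<gamma>]"

definition in_Sigma :: "real^3 \<Rightarrow> bool" where
  "in_Sigma \<psi> \<longleftrightarrow> inner (axis 3 1) \<psi> = 0"

definition F1 :: "real \<Rightarrow> real^3^3" where "F1 \<gamma> = Xm \<gamma> - Ym"
definition F2 :: "real \<Rightarrow> real^3^3" where "F2 \<gamma> = Xm \<gamma> ** Ym - Ym ** Xm \<gamma>"
definition F3 :: "real \<Rightarrow> real^3^3" where "F3 \<gamma> = Ym ** F2 \<gamma> - F2 \<gamma> ** Ym"

definition reduced :: "real \<Rightarrow> (real \<Rightarrow> real^3) \<Rightarrow> (real \<Rightarrow> real^3) \<Rightarrow> real \<Rightarrow> real \<times> real \<times> real" where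
  "reduced \<gamma> \<psi> p t =
     (inner (p t) (F1 \<gamma> *v \<psi> t), inner (p t) (F2 \<gamma> *v \<psi> t), inner (p t) (F3 \<gamma> *v \<psi> t))"

definition trajectory_with ::
  "real \<Rightarrow> (real \<Rightarrow> real^3^3) \<Rightarrow> real \<Rightarrow> (real \<Rightarrow> real^3) \<Rightarrow> real set \<Rightarrow> bool" where
  "trajectory_with \<gamma> A T \<psi> S \<longleftrightarrow>
     0 \<le> T \<and> finite S \<and>
     (\<forall>t\<in>{0..T}. A t \<in> {Xm \<gamma>, Ym}) \<and>
     (\<forall>t\<in>{0..T} - S. \<exists>e>0. \<forall>t'\<in>{0..T}. \<bar>t' - t\<bar> < e \<longrightarrow> A t' = A t) \<and>
     continuous_on {0..T} \<psi> \<and> \<psi> 0 = psi0 \<gamma> \<and>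
     (\<forall>t\<in>{0..T} - S. (\<psi> has_vector_derivative (A t *v \<psi> t)) (at t within {0..T}))"

definition trajectory :: "real \<Rightarrow> (real \<Rightarrow> real^3^3) \<Rightarrow> real \<Rightarrow> (real \<Rightarrow> real^3) \<Rightarrow> bool" where
  "trajectory \<gamma> A T \<psi> \<longleftrightarrow> (\<exists>S. trajectory_with \<gamma> A T \<psi> S)"

definition time_optimal :: "real \<Rightarrow> (real \<Rightarrow> real^3^3) \<Rightarrow> real \<Rightarrow> (real \<Rightarrow> real^3) \<Rightarrow> bool" where
  "time_optimal \<gamma> A T \<psi> \<longleftrightarrow>
     trajectory \<gamma> A T \<psi> \<and> in_Sigma (\<psi> T) \<and>
     (\<forall>A' T' \<psi>'. trajectory \<gamma> A' T' \<psi>' \<and> in_Sigma (\<psi>' T') \<longrightarrow> T \<le> T')"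

definition normal_extremal ::
  "real \<Rightarrow> (real \<Rightarrow> real^3^3) \<Rightarrow> real \<Rightarrow> (real \<Rightarrow> real^3) \<Rightarrow> (real \<Rightarrow> real^3) \<Rightarrow> bool" where
  "normal_extremal \<gamma> A T \<psi> p \<longleftrightarrow>
     (\<exists>S. trajectory_with \<gamma> A T \<psi> S \<and>
        continuous_on {0..T} p \<and> (\<exists>t\<in>{0..T}. p t \<noteq> 0) \<and>
        (\<forall>t\<in>{0..T} - S. (p has_vector_derivative (- (transpose (A t) *v p t))) (at t within {0..T}))) \<and>
     (AE t in lborel. t \<in> {0..T} \<longrightarrow>
        (\<forall>B\<in>{Xm \<gamma>, Ym}. inner (p t) (B *v \<psi> t) - 1 \<le> inner (p t) (A t *v \<psi> t) - 1))"

definition switching_time :: "(real \<Rightarrow> real^3^3) \<Rightarrow> real \<Rightarrow> real \<Rightarrow> bool" where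
  "switching_time A T t \<longleftrightarrow> t \<in> {0<..<T} \<and>
     \<not> (\<exists>e>0. \<exists>B. \<forall>t'. 0 < \<bar>t' - t\<bar> \<and> \<bar>t' - t\<bar> < e \<longrightarrow> A t' = B)"

definition regular ::
  "real \<Rightarrow> (real \<Rightarrow> real^3^3) \<Rightarrow> real \<Rightarrow> (real \<Rightarrow> real^3) \<Rightarrow> (real \<Rightarrow> real^3) \<Rightarrow> bool" where
  "regular \<gamma> A T \<psi> p \<longleftrightarrow>
     (\<forall>t\<in>{0..T}. fst (reduced \<gamma> \<psi> p t) = 0 \<longrightarrow>
        (\<exists>e>0. \<forall>t'\<in>{0..T}. 0 < \<bar>t' - t\<bar> \<and> \<bar>t' - t\<bar> < e \<longrightarrow> fst (reduced \<gamma> \<psi> p t') \<noteq> 0)) \<and>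
     (\<forall>t. switching_time A T t \<longrightarrow>
        fst (reduced \<gamma> \<psi> p t) = 0 \<and> fst (snd (reduced \<gamma> \<psi> p t)) \<noteq> 0)"

definition Y_solution ::
  "real \<Rightarrow> real^3 \<Rightarrow> real^3 \<Rightarrow> (real \<Rightarrow> real^3) \<Rightarrow> (real \<Rightarrow> real^3) \<Rightarrow> bool" where
  "Y_solution L \<psi>1 p1 q r \<longleftrightarrow> q 0 = \<psi>1 \<and> r 0 = p1 \<and>
     (\<forall>t\<in>{0..L}. (q has_vector_derivative (Ym *v q t)) (at t within {0..L}) \<and>
                  (r has_vector_derivative (- (transpose Ym *v r t))) (at t within {0..L}))"

definition Y_arc_s2s ::
  "real \<Rightarrow> real^3 \<Rightarrow> real^3 \<Rightarrow> real \<Rightarrow> real \<times> real \<times> real \<Rightarrow> bool" where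
  "Y_arc_s2s \<gamma> \<psi>1 p1 L d \<longleftrightarrow> 0 < L \<and>
     (\<exists>q r. Y_solution L \<psi>1 p1 q r) \<and>
     (\<forall>q r. Y_solution L \<psi>1 p1 q r \<longrightarrow>
        fst (reduced \<gamma> q r 0) = 0 \<and>
        (\<forall>t\<in>{0<..<L}. fst (reduced \<gamma> q r t) \<noteq> 0) \<and>
        reduced \<gamma> q r L = d)"

end

(* Along an arc with constant control B, the pairing <p, F psi> has derivative <p, [F, B] psi>, so the
   Lie brackets of F1, F2, F3 with X and Y turn the reduced data into a linear ODE.  On an X-arc,
   (phi1, phi2) is a harmonic oscillator of frequency sin gamma and phi3 - sin^2 gamma phi1 is
   conserved; hence an X-arc of length pi / sin gamma that starts at a zero of phi1 maps (0, a, b) to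
   (0, -a, b).  On a Y-arc, (phi2, phi3) rotates with unit speed and phi3 - phi1 is conserved; hence a
   Y-arc of length in (0, 2 pi) between two zeros of phi1 also maps (0, a, b) to (0, -a, b).  Composing
   three such maps gives the data at the end of the block, and the Y-arc started at its beginning
   reaches the same data after a time 2 theta < 2 pi, where (a, b) is proportional to
   (sin theta, cos theta).
   Non-optimality is seen directly: the constant control X steers psi0 into Sigma at time
   pi / (2 sin gamma), whereas the block alone lasts longer than 2 pi / sin gamma. *)

theory Submission
  imports Defs
begin

lemma has_real_derivative_costate_pairing:
  fixes B F :: "real^'n^'n" and q r :: "real \<Rightarrow> real^'n"
  assumes q: "(q has_vector_derivative (B *v q t)) (at t within S)"
    and r: "(r has_vector_derivative (- (transpose B *v r t))) (at t within S)"
  shows "((\<lambda>t. inner (r t) (F *v q t)) has_real_derivative inner (r t) ((F ** B - B ** F) *v q t))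
    (at t within S)"
proof -
  have Fq: "((\<lambda>t. F *v q t) has_vector_derivative F *v (B *v q t)) (at t within S)"
    by (rule bounded_linear.has_vector_derivative[OF matrix_vector_mul_bounded_linear q])
  have "((\<lambda>t. inner (r t) (F *v q t)) has_vector_derivative
      inner (r t) (F *v (B *v q t)) + inner (- (transpose B *v r t)) (F *v q t)) (at t within S)"
    by (rule bounded_bilinear.has_vector_derivative[OF bounded_bilinear_inner r Fq])
  moreover have "inner (r t) (F *v (B *v q t)) + inner (- (transpose B *v r t)) (F *v q t)
      = inner (r t) ((F ** B - B ** F) *v q t)"
    by (simp add: dot_lmul_matrix matrix_vector_mul_assoc matrix_vector_mult_diff_rdistrib
        inner_diff_right)
  ultimately show ?thesis by (simp add: has_real_derivative_iff_has_vector_derivative)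
qed

lemma matrix_vector_mult_uminus_left: "(- A) *v x = - (A *v x)" for A :: "'a::ring_1^'n^'m"
  by (simp add: matrix_vector_mult_def vec_eq_iff sum_negf)

lemma has_real_derivative_zero_constant_interval:
  fixes g :: "real \<Rightarrow> real"
  assumes "finite k" "continuous_on {u..v} g"
    and "\<And>t. t \<in> {u..v} - k \<Longrightarrow> (g has_real_derivative 0) (at t within {u..v})"
    and "x \<in> {u..v}"
  shows "g x = g u"
  by (rule has_derivative_zero_unique_strong_interval[OF assms(1,2) refl])
     (use assms in \<open>auto simp: has_field_derivative_def mult_zero_left[abs_def]\<close>)

lemma oscillator_half_period:
  fixes f1 f2 f3 :: "real \<Rightarrow> real"
  assumes s: "0 < s" and k: "finite k" and v: "v = u + pi / s"
    and cont: "continuous_on {u..v} f1" "continuous_on {u..v} f2" "continuous_on {u..v} f3"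
    and f1': "\<And>t. t \<in> {u..v} - k \<Longrightarrow> (f1 has_real_derivative f2 t) (at t within {u..v})"
    and f2': "\<And>t. t \<in> {u..v} - k \<Longrightarrow> (f2 has_real_derivative - (s\<^sup>2 * f1 t)) (at t within {u..v})"
    and f3': "\<And>t. t \<in> {u..v} - k \<Longrightarrow> (f3 has_real_derivative s\<^sup>2 * f2 t) (at t within {u..v})"
    and f1u: "f1 u = 0"
  shows "f1 v = 0 \<and> f2 v = - f2 u \<and> f3 v = f3 u"
proof -
  have vv: "v \<in> {u..v}" using s v by simp
  define g1 where "g1 t = f1 t * cos (s * (t - u)) - f2 t / s * sin (s * (t - u))" for t
  define g2 where "g2 t = f1 t * s * sin (s * (t - u)) + f2 t * cos (s * (t - u))" for t
  define g3 where "g3 t = f3 t - s\<^sup>2 * f1 t" for t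
  have "g1 v = g1 u"
  proof (rule has_real_derivative_zero_constant_interval[OF k _ _ vv])
    show "continuous_on {u..v} g1" unfolding g1_def by (intro continuous_intros cont) (use s in simp)
    fix t assume t: "t \<in> {u..v} - k"
    show "(g1 has_real_derivative 0) (at t within {u..v})" unfolding g1_def
      using s by (auto intro!: derivative_eq_intros f1'[OF t] f2'[OF t] simp: power2_eq_square field_simps)
  qed
  moreover have "g2 v = g2 u"
  proof (rule has_real_derivative_zero_constant_interval[OF k _ _ vv])
    show "continuous_on {u..v} g2" unfolding g2_def by (intro continuous_intros cont)
    fix t assume t: "t \<in> {u..v} - k"
    show "(g2 has_real_derivative 0) (at t within {u..v})" unfolding g2_def
      using s by (auto intro!: derivative_eq_intros f1'[OF t] f2'[OF t] simp: power2_eq_square field_simps)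
  qed
  moreover have "g3 v = g3 u"
  proof (rule has_real_derivative_zero_constant_interval[OF k _ _ vv])
    show "continuous_on {u..v} g3" unfolding g3_def by (intro continuous_intros cont)
    fix t assume t: "t \<in> {u..v} - k"
    show "(g3 has_real_derivative 0) (at t within {u..v})" unfolding g3_def
      by (auto intro!: derivative_eq_intros f1'[OF t] f3'[OF t])
  qed
  moreover have "s * (v - u) = pi" using s v by simp
  ultimately show ?thesis using f1u by (simp add: g1_def g2_def g3_def)
qed

lemma rotation_system_solution:
  fixes f1 f2 f3 :: "real \<Rightarrow> real"
  assumes k: "finite k"
    and cont: "continuous_on {u..v} f1" "continuous_on {u..v} f2" "continuous_on {u..v} f3"
    and f1': "\<And>t. t \<in> {u..v} - k \<Longrightarrow> (f1 has_real_derivative f2 t) (at t within {u..v})"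
    and f2': "\<And>t. t \<in> {u..v} - k \<Longrightarrow> (f2 has_real_derivative - f3 t) (at t within {u..v})"
    and f3': "\<And>t. t \<in> {u..v} - k \<Longrightarrow> (f3 has_real_derivative f2 t) (at t within {u..v})"
    and t: "t \<in> {u..v}"
  shows "f2 t = f2 u * cos (t - u) - f3 u * sin (t - u)"
    and "f3 t = f2 u * sin (t - u) + f3 u * cos (t - u)"
    and "f1 t = f3 t - f3 u + f1 u"
proof -
  define g1 where "g1 t = f3 t - f1 t" for t
  define g2 where "g2 t = f2 t * cos (t - u) + f3 t * sin (t - u)" for t
  define g3 where "g3 t = - f2 t * sin (t - u) + f3 t * cos (t - u)" for t
  have e1: "g1 t = g1 u"
  proof (rule has_real_derivative_zero_constant_interval[OF k _ _ t])
    show "continuous_on {u..v} g1" unfolding g1_def by (intro continuous_intros cont)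
    fix t assume t: "t \<in> {u..v} - k"
    show "(g1 has_real_derivative 0) (at t within {u..v})" unfolding g1_def
      by (auto intro!: derivative_eq_intros f1'[OF t] f3'[OF t])
  qed
  have e2: "g2 t = g2 u"
  proof (rule has_real_derivative_zero_constant_interval[OF k _ _ t])
    show "continuous_on {u..v} g2" unfolding g2_def by (intro continuous_intros cont)
    fix t assume t: "t \<in> {u..v} - k"
    show "(g2 has_real_derivative 0) (at t within {u..v})" unfolding g2_def
      by (auto intro!: derivative_eq_intros f2'[OF t] f3'[OF t] simp: algebra_simps)
  qed
  have e3: "g3 t = g3 u"
  proof (rule has_real_derivative_zero_constant_interval[OF k _ _ t])
    show "continuous_on {u..v} g3" unfolding g3_def by (intro continuous_intros cont)
    fix t assume t: "t \<in> {u..v} - k"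
    show "(g3 has_real_derivative 0) (at t within {u..v})" unfolding g3_def
      by (auto intro!: derivative_eq_intros f2'[OF t] f3'[OF t] simp: algebra_simps)
  qed
  have sc: "(sin (t - u))\<^sup>2 + (cos (t - u))\<^sup>2 = 1" by simp
  have "f2 t = g2 t * cos (t - u) - g3 t * sin (t - u)"
    using sc unfolding g2_def g3_def power2_eq_square by algebra
  then show "f2 t = f2 u * cos (t - u) - f3 u * sin (t - u)" using e2 e3 by (simp add: g2_def g3_def)
  have "f3 t = g2 t * sin (t - u) + g3 t * cos (t - u)"
    using sc unfolding g2_def g3_def power2_eq_square by algebra
  then show "f3 t = f2 u * sin (t - u) + f3 u * cos (t - u)" using e2 e3 by (simp add: g2_def g3_def)
  show "f1 t = f3 t - f3 u + f1 u" using e1 by (simp add: g1_def)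
qed

lemmas matrix3_simps = vec_eq_iff forall_3 matrix_matrix_mult_def sum_3
  Xm_def Ym_def F1_def F2_def F3_def Let_def

lemma F1_Xm_commutator: "F1 \<gamma> ** Xm \<gamma> - Xm \<gamma> ** F1 \<gamma> = F2 \<gamma>"
  by (simp add: matrix3_simps algebra_simps)

lemma F2_Xm_commutator: "F2 \<gamma> ** Xm \<gamma> - Xm \<gamma> ** F2 \<gamma> = - ((sin \<gamma>)\<^sup>2 *\<^sub>R F1 \<gamma>)"
  by (simp add: matrix3_simps algebra_simps power2_eq_square)
     (use sin_cos_squared_add[of \<gamma>] in \<open>unfold power2_eq_square, algebra\<close>)

lemma F3_Xm_commutator: "F3 \<gamma> ** Xm \<gamma> - Xm \<gamma> ** F3 \<gamma> = (sin \<gamma>)\<^sup>2 *\<^sub>R F2 \<gamma>"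
  by (simp add: matrix3_simps algebra_simps power2_eq_square)

lemma F1_Ym_commutator: "F1 \<gamma> ** Ym - Ym ** F1 \<gamma> = F2 \<gamma>"
  by (simp add: matrix3_simps algebra_simps)

lemma F2_Ym_commutator: "F2 \<gamma> ** Ym - Ym ** F2 \<gamma> = - F3 \<gamma>"
  by (simp add: matrix3_simps algebra_simps)

lemma F3_Ym_commutator: "F3 \<gamma> ** Ym - Ym ** F3 \<gamma> = F2 \<gamma>"
  by (simp add: matrix3_simps algebra_simps)

definition bang_arc ::
  "real^'n^'n \<Rightarrow> real \<Rightarrow> real \<Rightarrow> (real \<Rightarrow> real^'n) \<Rightarrow> (real \<Rightarrow> real^'n) \<Rightarrow> bool" where
  "bang_arc B u v q r \<longleftrightarrow> continuous_on {u..v} q \<and> continuous_on {u..v} r \<and>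
     (\<exists>k. finite k \<and> (\<forall>t\<in>{u..v} - k.
        (q has_vector_derivative (B *v q t)) (at t within {u..v}) \<and>
        (r has_vector_derivative (- (transpose B *v r t))) (at t within {u..v})))"

lemma bang_arc_pairing:
  fixes B :: "real^'n^'n"
  assumes "bang_arc B u v q r"
  obtains k where "finite k"
    and "\<And>F. continuous_on {u..v} (\<lambda>t. inner (r t) (F *v q t))"
    and "\<And>F t. t \<in> {u..v} - k \<Longrightarrow> ((\<lambda>t. inner (r t) (F *v q t)) has_real_derivative
      inner (r t) ((F ** B - B ** F) *v q t)) (at t within {u..v})"
proof -
  obtain k where k: "finite k" and cq: "continuous_on {u..v} q" and cr: "continuous_on {u..v} r"
    and d: "\<forall>t\<in>{u..v} - k. (q has_vector_derivative (B *v q t)) (at t within {u..v}) \<and>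
        (r has_vector_derivative (- (transpose B *v r t))) (at t within {u..v})"
    using assms unfolding bang_arc_def by blast
  show ?thesis
  proof (rule that[OF k])
    show "continuous_on {u..v} (\<lambda>t. inner (r t) (F *v q t))" for F :: "real^'n^'n"
      by (intro continuous_intros cr bounded_linear.continuous_on[OF matrix_vector_mul_bounded_linear cq])
    show "((\<lambda>t. inner (r t) (F *v q t)) has_real_derivative inner (r t) ((F ** B - B ** F) *v q t))
        (at t within {u..v})" if "t \<in> {u..v} - k" for F t
      using d that by (blast intro: has_real_derivative_costate_pairing)
  qed
qed

lemma reduced_after_X_arc:
  assumes s: "0 < sin \<gamma>" and arc: "bang_arc (Xm \<gamma>) u v q r" and v: "v = u + pi / sin \<gamma>"
    and start: "reduced \<gamma> q r u = (0, a, b)"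
  shows "reduced \<gamma> q r v = (0, - a, b)"
proof -
  obtain k where k: "finite k" and cont: "\<And>F. continuous_on {u..v} (\<lambda>t. inner (r t) (F *v q t))"
    and d: "\<And>F t. t \<in> {u..v} - k \<Longrightarrow> ((\<lambda>t. inner (r t) (F *v q t)) has_real_derivative
      inner (r t) ((F ** Xm \<gamma> - Xm \<gamma> ** F) *v q t)) (at t within {u..v})"
    using bang_arc_pairing[OF arc] by blast
  define \<phi> where "\<phi> F t = inner (r t) (F *v q t)" for F t
  have "\<phi> (F1 \<gamma>) v = 0 \<and> \<phi> (F2 \<gamma>) v = - \<phi> (F2 \<gamma>) u \<and> \<phi> (F3 \<gamma>) v = \<phi> (F3 \<gamma>) u"
  proof (rule oscillator_half_period[OF s k v])
    fix t assume t: "t \<in> {u..v} - k"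
    show "(\<phi> (F1 \<gamma>) has_real_derivative \<phi> (F2 \<gamma>) t) (at t within {u..v})"
      using d[OF t, of "F1 \<gamma>"] unfolding \<phi>_def F1_Xm_commutator .
    show "(\<phi> (F2 \<gamma>) has_real_derivative - ((sin \<gamma>)\<^sup>2 * \<phi> (F1 \<gamma>) t)) (at t within {u..v})"
      using d[OF t, of "F2 \<gamma>"]
      unfolding \<phi>_def F2_Xm_commutator
      by (simp add: matrix_vector_mult_uminus_left flip: scaleR_matrix_vector_assoc)
    show "(\<phi> (F3 \<gamma>) has_real_derivative (sin \<gamma>)\<^sup>2 * \<phi> (F2 \<gamma>) t) (at t within {u..v})"
      using d[OF t, of "F3 \<gamma>"]
      unfolding \<phi>_def F3_Xm_commutator by (simp flip: scaleR_matrix_vector_assoc)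
  qed (use cont start in \<open>simp_all add: \<phi>_def reduced_def\<close>)
  then show ?thesis using start by (simp add: \<phi>_def reduced_def)
qed

lemma reduced_along_Y_arc:
  assumes arc: "bang_arc Ym u v q r" and start: "reduced \<gamma> q r u = (0, a, b)" and t: "t \<in> {u..v}"
  shows "reduced \<gamma> q r t = (a * sin (t - u) + b * cos (t - u) - b,
    a * cos (t - u) - b * sin (t - u), a * sin (t - u) + b * cos (t - u))"
proof -
  obtain k where k: "finite k" and cont: "\<And>F. continuous_on {u..v} (\<lambda>t. inner (r t) (F *v q t))"
    and d: "\<And>F t. t \<in> {u..v} - k \<Longrightarrow> ((\<lambda>t. inner (r t) (F *v q t)) has_real_derivative
      inner (r t) ((F ** Ym - Ym ** F) *v q t)) (at t within {u..v})"
    using bang_arc_pairing[OF arc] by blast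
  define \<phi> where "\<phi> F t = inner (r t) (F *v q t)" for F t
  have d1: "(\<phi> (F1 \<gamma>) has_real_derivative \<phi> (F2 \<gamma>) t) (at t within {u..v})"
    and d2: "(\<phi> (F2 \<gamma>) has_real_derivative - \<phi> (F3 \<gamma>) t) (at t within {u..v})"
    and d3: "(\<phi> (F3 \<gamma>) has_real_derivative \<phi> (F2 \<gamma>) t) (at t within {u..v})"
    if "t \<in> {u..v} - k" for t
    using d[OF that, of "F1 \<gamma>"] d[OF that, of "F2 \<gamma>"] d[OF that, of "F3 \<gamma>"]
    unfolding \<phi>_def F1_Ym_commutator F2_Ym_commutator F3_Ym_commutator
    by (simp_all add: matrix_vector_mult_uminus_left)
  note sol = rotation_system_solution[OF k cont[of "F1 \<gamma>"] cont[of "F2 \<gamma>"] cont[of "F3 \<gamma>"], folded \<phi>_def,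
      OF d1 d2 d3 t]
  show ?thesis using sol start by (simp add: \<phi>_def reduced_def)
qed

lemma cos_less_one: "0 < x \<Longrightarrow> x < 2 * pi \<Longrightarrow> cos x < 1"
proof -
  assume "0 < x" "x < 2 * pi"
  then have "0 < sin (x / 2)" by (intro sin_gt_zero) auto
  then show "cos x < 1" using cos_double_sin[of "x / 2"] by simp
qed

lemma reduced_Y_arc_at_switch:
  assumes arc: "bang_arc Ym u v q r" and start: "reduced \<gamma> q r u = (0, a, b)"
    and len: "0 < v - u" "v - u < 2 * pi" and switch: "fst (reduced \<gamma> q r v) = 0"
  shows "reduced \<gamma> q r v = (0, - a, b)"
proof -
  define l where "l = v - u"
  have data: "reduced \<gamma> q r v = (a * sin l + b * cos l - b, a * cos l - b * sin l, a * sin l + b * cos l)"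
    using reduced_along_Y_arc[OF arc start, of v] len unfolding l_def by simp
  with switch have chord: "a * sin l + b * cos l - b = 0" by simp
  have "(a * cos l - b * sin l + a) * (1 - cos l) = sin l * (a * sin l + b * cos l - b)"
    using sin_cos_squared_add[of l] unfolding power2_eq_square by algebra
  also have "\<dots> = 0" using chord by simp
  finally have "a * cos l - b * sin l = - a"
    using cos_less_one[of l] len unfolding l_def by simp
  with data chord show ?thesis by simp
qed

lemma normal_extremal_bang_arc:
  assumes ext: "normal_extremal \<gamma> A T \<psi> p" and uv: "0 \<le> u" "v \<le> T"
    and bang: "\<forall>t\<in>{u<..<v}. A t = B"
  shows "bang_arc B u v \<psi> p"
proof -
  obtain S where S: "finite S" and c\<psi>: "continuous_on {0..T} \<psi>" and cp: "continuous_on {0..T} p"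
    and d\<psi>: "\<forall>t\<in>{0..T} - S. (\<psi> has_vector_derivative (A t *v \<psi> t)) (at t within {0..T})"
    and dp: "\<forall>t\<in>{0..T} - S. (p has_vector_derivative (- (transpose (A t) *v p t))) (at t within {0..T})"
    using ext unfolding normal_extremal_def trajectory_with_def by blast
  have sub: "{u..v} \<subseteq> {0..T}" using uv by auto
  have "(\<psi> has_vector_derivative (B *v \<psi> t)) (at t within {u..v}) \<and>
      (p has_vector_derivative (- (transpose B *v p t))) (at t within {u..v})"
    if t: "t \<in> {u..v} - (S \<union> {u, v})" for t
  proof -
    have "t \<in> {0..T} - S" "A t = B" using t sub bang by auto
    then show ?thesis
      using d\<psi> dp has_vector_derivative_within_subset[OF _ sub] by metis
  qed
  moreover have "finite (S \<union> {u, v})" using S by simp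
  ultimately show ?thesis
    unfolding bang_arc_def using c\<psi> cp continuous_on_subset[OF _ sub] by blast
qed

lemma switching_time_between_arcs:
  assumes "u < t" "t < w" "0 < t" "t < T" "B1 \<noteq> B2"
    and "\<forall>x\<in>{u<..<t}. A x = B1" "\<forall>x\<in>{t<..<w}. A x = B2"
  shows "switching_time A T t"
  unfolding switching_time_def
proof (intro conjI notI)
  show "t \<in> {0<..<T}" using assms by simp
  assume "\<exists>e>0. \<exists>B. \<forall>t'. 0 < \<bar>t' - t\<bar> \<and> \<bar>t' - t\<bar> < e \<longrightarrow> A t' = B"
  then obtain e B where "e > 0" and const: "\<And>t'. 0 < \<bar>t' - t\<bar> \<and> \<bar>t' - t\<bar> < e \<Longrightarrow> A t' = B"
    by blast
  define d where "d = min e (min (t - u) (w - t)) / 2"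
  have d: "0 < d" "d < e" "d < t - u" "d < w - t" using \<open>e > 0\<close> assms by (auto simp: d_def)
  then have "A (t - d) = B1" "A (t + d) = B2" using assms by auto
  moreover have "A (t - d) = B" "A (t + d) = B" using d by (auto intro: const)
  ultimately show False using \<open>B1 \<noteq> B2\<close> by simp
qed

lemma Xm_neq_Ym: "0 < sin \<gamma> \<Longrightarrow> 0 < cos \<gamma> \<Longrightarrow> Xm \<gamma> \<noteq> Ym"
  by (auto simp: Xm_def Ym_def Let_def vec_eq_iff forall_3)

lemma Ym_flow_exists:
  fixes x :: "real^3"
  shows "\<exists>q. q 0 = x \<and> (\<forall>t. (q has_vector_derivative (Ym *v q t)) (at t))"
proof -
  define q :: "real \<Rightarrow> real^3"
    where "q t = vector [cos t * x$1 + sin t * x$2, cos t * x$2 - sin t * x$1, x$3]" for t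
  have "(q has_vector_derivative (Ym *v q t)) (at t)" for t
  proof -
    have "q = (\<lambda>t. cos t *\<^sub>R vector [x$1, x$2, 0] + sin t *\<^sub>R vector [x$2, - x$1, 0] + vector [0, 0, x$3])"
      by (auto simp: q_def vec_eq_iff forall_3)
    then have "(q has_vector_derivative
        - sin t *\<^sub>R vector [x$1, x$2, 0] + cos t *\<^sub>R vector [x$2, - x$1, 0]) (at t)"
      by (auto intro!: derivative_eq_intros)
    moreover have "- sin t *\<^sub>R vector [x$1, x$2, 0] + cos t *\<^sub>R vector [x$2, - x$1, 0] = Ym *v q t"
      by (simp add: q_def Ym_def vec_eq_iff forall_3 matrix_vector_mult_def sum_3 algebra_simps)
    ultimately show ?thesis by simp
  qed
  moreover have "q 0 = x" by (simp add: q_def vec_eq_iff forall_3)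
  ultimately show ?thesis by blast
qed

lemma Ym_costate_eq: "- (transpose Ym *v x) = Ym *v x"
  by (simp add: Ym_def transpose_def vec_eq_iff forall_3 matrix_vector_mult_def sum_3)

lemma Y_solution_exists: "\<exists>q r. Y_solution L \<psi>1 p1 q r"
proof -
  obtain q r where "q 0 = \<psi>1" "\<forall>t. (q has_vector_derivative (Ym *v q t)) (at t)"
    and "r 0 = p1" "\<forall>t. (r has_vector_derivative (Ym *v r t)) (at t)"
    using Ym_flow_exists by metis
  then have "Y_solution L \<psi>1 p1 q r"
    unfolding Y_solution_def Ym_costate_eq by (blast intro: has_vector_derivative_at_within)
  then show ?thesis by blast
qed

lemma Y_solution_bang_arc: "Y_solution L \<psi>1 p1 q r \<Longrightarrow> bang_arc Ym 0 L q r"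
  unfolding Y_solution_def bang_arc_def
  by (metis Diff_empty finite.emptyI continuous_on_eq_continuous_within
      has_vector_derivative_continuous)

lemma Y_arc_s2s_exists:
  assumes a: "a \<noteq> 0" and start: "reduced \<gamma> \<psi> p t = (0, a, b)"
  shows "\<exists>L. 0 < L \<and> L < 2 * pi \<and> Y_arc_s2s \<gamma> (\<psi> t) (p t) L (0, - a, b)"
proof -
  define \<theta> where "\<theta> = pi / 2 - arctan (b / a)"
  define R where "R = sqrt (1 + (b / a)\<^sup>2)"
  have R: "0 < R" by (simp add: R_def add_pos_nonneg)
  have \<theta>: "0 < \<theta>" "\<theta> < pi" using arctan_bounded[of "b / a"] by (auto simp: \<theta>_def)
  have sc: "sin \<theta> = 1 / R" "cos \<theta> = b / a / R"
    by (simp_all add: \<theta>_def R_def sin_diff cos_diff sin_arctan cos_arctan)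
  define K where "K = a * R"
  have ab: "a = K * sin \<theta>" "b = K * cos \<theta>" using R a by (simp_all add: K_def sc)
  have K: "K \<noteq> 0" using R a by (simp add: K_def)
  define L where "L = 2 * \<theta>"
  have L: "0 < L" "L < 2 * pi" using \<theta> by (simp_all add: L_def)
  have start': "reduced \<gamma> q r 0 = (0, a, b)" if Y: "Y_solution L (\<psi> t) (p t) q r" for q r
    using Y start by (simp add: Y_solution_def reduced_def)
  have phi1: "fst (reduced \<gamma> q r s) = K * (cos (s - \<theta>) - cos \<theta>)"
    if Y: "Y_solution L (\<psi> t) (p t) q r" and s: "s \<in> {0..L}" for q r s
    using reduced_along_Y_arc[OF Y_solution_bang_arc[OF Y] start'[OF Y] s]
    by (simp add: ab cos_diff algebra_simps)
  have "Y_arc_s2s \<gamma> (\<psi> t) (p t) L (0, - a, b)"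
    unfolding Y_arc_s2s_def
  proof (intro conjI allI impI ballI)
    fix q r assume Y: "Y_solution L (\<psi> t) (p t) q r"
    show "fst (reduced \<gamma> q r 0) = 0" using start'[OF Y] by simp
    show "fst (reduced \<gamma> q r s) \<noteq> 0" if s: "s \<in> {0<..<L}" for s
    proof -
      have "cos \<theta> < cos \<bar>s - \<theta>\<bar>" using s \<theta> by (intro cos_monotone_0_pi) (auto simp: L_def)
      then show ?thesis using phi1[OF Y] s K by simp
    qed
    show "reduced \<gamma> q r L = (0, - a, b)"
      using reduced_Y_arc_at_switch[OF Y_solution_bang_arc[OF Y] start'[OF Y]] phi1[OF Y] L
      by (simp add: L_def)
  qed (use L Y_solution_exists in auto)
  with L show ?thesis by blast
qed

lemma Xm_trajectory_reaches_Sigma: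
  assumes s: "0 < sin \<gamma>"
  shows "\<exists>A \<psi>. trajectory \<gamma> A (pi / (2 * sin \<gamma>)) \<psi> \<and> in_Sigma (\<psi> (pi / (2 * sin \<gamma>)))"
proof -
  define T where "T = pi / (2 * sin \<gamma>)"
  define q where "q t = cos (sin \<gamma> * t) *\<^sub>R psi0 \<gamma> + sin (sin \<gamma> * t) *\<^sub>R (axis 1 1 :: real^3)" for t
  have Xm_psi0: "Xm \<gamma> *v psi0 \<gamma> = sin \<gamma> *\<^sub>R axis 1 1"
    by (simp add: Xm_def psi0_def axis_def Let_def vec_eq_iff forall_3 matrix_vector_mult_def sum_3)
       (use sin_cos_squared_add[of \<gamma>] in \<open>unfold power2_eq_square, algebra\<close>)
  have Xm_e1: "Xm \<gamma> *v axis 1 1 = - sin \<gamma> *\<^sub>R psi0 \<gamma>"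
    by (simp add: Xm_def psi0_def axis_def Let_def vec_eq_iff forall_3 matrix_vector_mult_def sum_3
        power2_eq_square)
  have dq: "(q has_vector_derivative (Xm \<gamma> *v q t)) (at t)" for t
    unfolding q_def
    by (auto intro!: derivative_eq_intros
        simp: matrix_vector_right_distrib matrix_vector_mult_scaleR Xm_psi0 Xm_e1 algebra_simps)
  have "trajectory_with \<gamma> (\<lambda>_. Xm \<gamma>) T q {}"
    unfolding trajectory_with_def
  proof (intro conjI ballI)
    show "continuous_on {0..T} q"
      using dq has_vector_derivative_continuous continuous_at_imp_continuous_on by blast
    show "(q has_vector_derivative (Xm \<gamma> *v q t)) (at t within {0..T})" for t
      using dq has_vector_derivative_at_within by blast
  qed (use s in \<open>auto simp: T_def q_def\<close>)
  moreover have "in_Sigma (q T)"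
  proof -
    have "sin \<gamma> * T = pi / 2" using s by (simp add: T_def)
    then have "cos (sin \<gamma> * T) = 0" by (simp only: cos_pi_half)
    then show ?thesis by (simp add: in_Sigma_def q_def inner_vec_def sum_3 axis_def psi0_def)
  qed
  ultimately show ?thesis unfolding trajectory_def T_def by blast
qed

lemma time_optimal_le:
  assumes "0 < sin \<gamma>" and "time_optimal \<gamma> A T \<psi>"
  shows "T \<le> pi / (2 * sin \<gamma>)"
  using assms Xm_trajectory_reaches_Sigma unfolding time_optimal_def by blast

theorem mainTheorem12:
  fixes \<gamma> T l t0 t1 t2 t3 a b :: real
    and A :: "real \<Rightarrow> real^3^3" and \<psi> p :: "real \<Rightarrow> real^3"
  assumes gamma: "0 < \<gamma>" "\<gamma> < pi / 2"
    and ext: "normal_extremal \<gamma> A T \<psi> p"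
    and reg: "regular \<gamma> A T \<psi> p"
    and ell: "0 < l" "l < 2 * pi"
    and times: "t1 = t0 + pi / sin \<gamma>" "t2 = t1 + l" "t3 = t2 + pi / sin \<gamma>"
    and arcX1: "\<forall>t\<in>{t0<..<t1}. A t = Xm \<gamma>"
    and arcY: "\<forall>t\<in>{t1<..<t2}. A t = Ym"
    and arcX2: "\<forall>t\<in>{t2<..<t3}. A t = Xm \<gamma>"
    and sw: "switching_time A T t0" "switching_time A T t3"
    and data: "reduced \<gamma> \<psi> p t0 = (0, a, b)" "a \<noteq> 0"
  shows "reduced \<gamma> \<psi> p t3 = (0, - a, b)
    \<and> (\<exists>L. 0 < L \<and> L < 2 * pi \<and> Y_arc_s2s \<gamma> (\<psi> t0) (p t0) L (0, - a, b) \<and> L < t3 - t0)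
    \<and> \<not> time_optimal \<gamma> A T \<psi>"
proof -
  have s: "0 < sin \<gamma>" and c: "0 < cos \<gamma>" using gamma by (auto intro: sin_gt_zero cos_gt_zero)
  have X_len: "0 < pi / sin \<gamma>" "pi \<le> pi / sin \<gamma>" using s by (simp_all add: field_simps)
  have ends: "0 < t0" "t3 < T" using sw by (simp_all add: switching_time_def)
  have ord: "t0 < t1" "t1 < t2" "t2 < t3" using times ell X_len by simp_all
  have arcs: "bang_arc (Xm \<gamma>) t0 t1 \<psi> p" "bang_arc Ym t1 t2 \<psi> p" "bang_arc (Xm \<gamma>) t2 t3 \<psi> p"
    using normal_extremal_bang_arc[OF ext] arcX1 arcY arcX2 ends ord by simp_all
  have data1: "reduced \<gamma> \<psi> p t1 = (0, - a, b)"
    by (rule reduced_after_X_arc[OF s arcs(1) times(1) data(1)])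
  have "switching_time A T t2"
    using switching_time_between_arcs[OF ord(2,3) _ _ _ arcY arcX2] Xm_neq_Ym[OF s c] ends ord
    by simp
  then have "fst (reduced \<gamma> \<psi> p t2) = 0" using reg by (simp add: regular_def)
  then have data2: "reduced \<gamma> \<psi> p t2 = (0, a, b)"
    using reduced_Y_arc_at_switch[OF arcs(2) data1] times ell by simp
  have data3: "reduced \<gamma> \<psi> p t3 = (0, - a, b)"
    by (rule reduced_after_X_arc[OF s arcs(3) times(3) data2])
  obtain L where L: "0 < L" "L < 2 * pi" "Y_arc_s2s \<gamma> (\<psi> t0) (p t0) L (0, - a, b)"
    using Y_arc_s2s_exists[OF data(2,1)] by blast
  have "L < t3 - t0" using L(2) times X_len ell by simp
  moreover have "\<not> time_optimal \<gamma> A T \<psi>"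
  proof
    assume "time_optimal \<gamma> A T \<psi>"
    then have "T \<le> pi / (2 * sin \<gamma>)" by (rule time_optimal_le[OF s])
    moreover have "pi / (2 * sin \<gamma>) < pi / sin \<gamma>" using s by (simp add: field_simps)
    ultimately show False using ends times ell X_len by simp
  qed
  ultimately show ?thesis using data3 L by blast
qed

end
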